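(* Let $p$ be a positive integer, let $1 \le r_1 \le \dots \le r_p$ be integers with $r_d \mid r_{d+1}$ for $d=1,\dots,p-1$, and let $\alpha \ge r_p$ be an integer. Then the edge-coloring $\psi_p$ of the complete graph on vertex set $\{0,1\}^\alpha$ defined below contains no striped $K_4$.
   Context: Set $r_0 = 1$ and $r_{p+1} = \alpha$. For $0 \le d \le p$ and a binary string $x$ of any length, write $x = (x^{(d)}_1, \dots, x^{(d)}_{m})$ for its decomposition into consecutive blocks, each of length $r_d$ except the last, which has length between $1$ and $r_d$. Define $\eta_d(x,y) = 0$ if $x=y$ and otherwise $\eta_d(x,y) = (i,\{x^{(d)}_i,y^{(d)}_i\})$ with $i$ the least index where $x^{(d)}_i \ne y^{(d)}_i$. For $x,y \in\{0,1\}^\alpha$ and $0\le d\le p$, decomposing $x,y$ into blocks of length $r_{d+1}$, $x=(x^{(d+1)}_1,\dots,x^{(d+1)}_{m'})$, set $\xi_d(x,y) = (\eta_d(x^{(d+1)}_1,y^{(d+1)}_1),\dots,\eta_d(x^{(d+1)}_{m'},y^{(d+1)}_{m'}))$ and $c_p(x,y) = (\xi_p(x,y),\dots,\xi_0(x,y))$. Order binary strings of each fixed length lexicographically. For $x<y$ in $\{0,1\}^\alpha$, with $x = (x^{(p)}_1,\dots,x^{(p)}_{a+1})$ the decomposition into blocks of length $r_p$, let $\delta_{p,i}(x,y) = +1$ if $x^{(p)}_i \le y^{(p)}_i$ and $-1$ if $x^{(p)}_i > y^{(p)}_i$, and $\Delta_p(x,y) = (\delta_{p,1}(x,y),\dots,\delta_{p,a+1}(x,y))$.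 Then $\psi_p$ assigns to the edge $\{x,y\}$, $x<y$, the color $(c_p(x,y), \Delta_p(x,y))$. A striped $K_4$ under an edge-coloring $f$ is a set of four vertices $\{a,b,c,e\}$ with $f(ab)=f(ce)$, $f(ac)=f(be)$, $f(ae)=f(bc)$, and $f(ab)$, $f(ac)$, $f(ae)$ pairwise distinct. *)

theory Defs
  imports Main
begin

text \<open>Binary strings are bool lists (False = 0, True = 1).\<close>

definition lex_less :: "bool list \<Rightarrow> bool list \<Rightarrow> bool" where
  "lex_less x y \<longleftrightarrow> length x = length y \<and>
     (\<exists>i < length x. take i x = take i y \<and> \<not> x ! i \<and> y ! i)"

definition lex_le :: "bool list \<Rightarrow> bool list \<Rightarrow> bool" where
  "lex_le x y \<longleftrightarrow> x = y \<or> lex_less x y"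

definition rseq :: "(nat \<Rightarrow> nat) \<Rightarrow> nat \<Rightarrow> nat \<Rightarrow> nat \<Rightarrow> nat" where
  "rseq r p \<alpha> d = (if d = 0 then 1 else if d = Suc p then \<alpha> else r d)"

text \<open>Decomposition into consecutive blocks of length k (last block of length 1..k).\<close>
definition blocks :: "nat \<Rightarrow> bool list \<Rightarrow> bool list list" where
  "blocks k x = map (\<lambda>i. take k (drop (i * k) x)) [0 ..< (length x + k - 1) div k]"

text \<open>eta: None plays the role of 0; otherwise (i, {x_i, y_i}) with i the least
  (1-based) index of differing blocks.\<close>
definition eta :: "nat \<Rightarrow> bool list \<Rightarrow> bool list \<Rightarrow> (nat \<times> bool list set) option" where
  "eta k x y = (if x = y then None else
     (let bx = blocks k x; by = blocks k y;
          i = (LEAST i. i < min (length bx) (length by) \<and> bx ! i \<noteq> by ! i)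
      in Some (Suc i, {bx ! i, by ! i})))"

definition xi :: "(nat \<Rightarrow> nat) \<Rightarrow> nat \<Rightarrow> nat \<Rightarrow> nat \<Rightarrow> bool list \<Rightarrow> bool list
                   \<Rightarrow> (nat \<times> bool list set) option list" where
  "xi r p \<alpha> d x y = map (\<lambda>(u, v). eta (rseq r p \<alpha> d) u v)
      (zip (blocks (rseq r p \<alpha> (Suc d)) x) (blocks (rseq r p \<alpha> (Suc d)) y))"

definition cp :: "(nat \<Rightarrow> nat) \<Rightarrow> nat \<Rightarrow> nat \<Rightarrow> bool list \<Rightarrow> bool list
                   \<Rightarrow> (nat \<times> bool list set) option list list" where
  "cp r p \<alpha> x y = map (\<lambda>d. xi r p \<alpha> d x y) (rev [0 ..< Suc p])"

definition Delta :: "(nat \<Rightarrow> nat) \<Rightarrow> nat \<Rightarrow> nat \<Rightarrow> bool list \<Rightarrow> bool list \<Rightarrow> int list" where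
  "Delta r p \<alpha> x y = map (\<lambda>(u, v). if lex_le u v then 1 else -1)
      (zip (blocks (rseq r p \<alpha> p) x) (blocks (rseq r p \<alpha> p) y))"

definition psi :: "(nat \<Rightarrow> nat) \<Rightarrow> nat \<Rightarrow> nat \<Rightarrow> bool list \<Rightarrow> bool list
                   \<Rightarrow> (nat \<times> bool list set) option list list \<times> int list" where
  "psi r p \<alpha> x y = (if lex_less x y then (cp r p \<alpha> x y, Delta r p \<alpha> x y)
                    else (cp r p \<alpha> y x, Delta r p \<alpha> y x))"

definition striped_K4 :: "('v \<Rightarrow> 'v \<Rightarrow> 'c) \<Rightarrow> 'v \<Rightarrow> 'v \<Rightarrow> 'v \<Rightarrow> 'v \<Rightarrow> bool" where
  "striped_K4 f a b c e \<longleftrightarrow> distinct [a, b, c, e] \<and>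
     f a b = f c e \<and> f a c = f b e \<and> f a e = f b c \<and>
     f a b \<noteq> f a c \<and> f a b \<noteq> f a e \<and> f a c \<noteq> f a e"

end

theory Submission
  imports Defs "HOL-Library.List_Lexorder"
begin

(* List the four vertices in lexicographic order as x < y < z < w. As psi is symmetric,
   a striped K_4 gives psi(x,y) = psi(z,w) and psi(x,w) = psi(y,z). The top component
   xi_p of c_p is eta_p applied to the whole strings, so the first equation says that the
   pairs x < y and z < w first differ in the same r_p-block i, in the same pair of blocks;
   both pairs being increasing, x and z, and y and w, agree on block i. Hence the i-th entry
   of Delta_p is +1 for (x,w) but -1 for (y,z), contradicting the second equation. *)

lemma lex_less_iff_less: "length x = length y \<Longrightarrow> lex_less x y \<longleftrightarrow> x < y"
  by (auto simp: lex_less_def list_less_def lexord_take_index_conv)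

lemma lex_le_iff_le: "length x = length y \<Longrightarrow> lex_le x y \<longleftrightarrow> x \<le> y"
  by (auto simp: lex_le_def lex_less_iff_less order_le_less)

lemma take_drop_eq_if_take_eq:
  "take n xs = take n ys \<Longrightarrow> m + k \<le> n \<Longrightarrow> take k (drop m xs) = take k (drop m ys)"
  by (metis add.commute min_absorb1 take_drop take_take)

lemma take_drop_less_if_first_difference:
  fixes xs ys :: "'a::linorder list"
  assumes "length xs = length ys" "n < length xs" "take n xs = take n ys" "xs ! n < ys ! n"
    and "m \<le> n" "n < m + k"
  shows "take k (drop m xs) < take k (drop m ys)"
proof -
  have "take (n - m) (take k (drop m zs)) = drop m (take n zs)" for zs :: "'a list"
    using assms(5,6) by (simp add: take_drop min_absorb1)
  moreover have "take k (drop m zs) ! (n - m) = zs ! n"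
    if "length zs = length xs" for zs :: "'a list"
    using assms(2,5,6) that by simp
  ultimately show ?thesis
    using assms unfolding list_less_def lexord_take_index_conv
    by (intro disjI2 exI[of _ "n - m"]) auto
qed

lemma length_blocks: "length (blocks k xs) = (length xs + k - 1) div k"
  by (simp add: blocks_def)

lemma nth_blocks: "j < length (blocks k xs) \<Longrightarrow> blocks k xs ! j = take k (drop (j * k) xs)"
  by (simp add: blocks_def)

lemma blocks_length_self: "0 < length xs \<Longrightarrow> blocks (length xs) xs = [xs]"
proof -
  assume "0 < length xs"
  then have "(length xs + length xs - 1) div length xs = 1"
    by (intro div_nat_eqI) auto
  then show ?thesis by (simp add: blocks_def)
qed

lemma eta_first_different_block:
  assumes "x < y" "length x = length y" "0 < k"
  obtains i where "i < length (blocks k x)" "i < length (blocks k y)"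
    "eta k x y = Some (Suc i, {blocks k x ! i, blocks k y ! i})" "blocks k x ! i < blocks k y ! i"
proof -
  obtain n where n: "n < length x" "take n x = take n y" "x ! n < y ! n"
    using assms(1,2) by (auto simp: list_less_def lexord_take_index_conv)
  define i where "i = n div k"
  have i_k: "i * k \<le> n" "n < i * k + k"
    using dividend_less_div_times[OF assms(3), of n] unfolding i_def by simp_all
  have i_len: "i < length (blocks k x)" "i < length (blocks k y)"
    using n(1) i_k assms(2,3)
    by (auto simp: length_blocks less_eq_div_iff_mult_less_eq Suc_le_eq[symmetric])
  have earlier: "blocks k x ! j = blocks k y ! j" if "j < i" for j
  proof -
    have "j * k + k \<le> n"
      using that i_k mult_le_mono1[of "Suc j" i k] by simp
    with n(2) have "take k (drop (j * k) x) = take k (drop (j * k) y)"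
      by (rule take_drop_eq_if_take_eq)
    then show ?thesis
      using that i_len by (simp add: nth_blocks)
  qed
  have less: "blocks k x ! i < blocks k y ! i"
    using take_drop_less_if_first_difference[OF assms(2) n i_k] i_len by (simp add: nth_blocks)
  have "(LEAST j. j < min (length (blocks k x)) (length (blocks k y)) \<and>
      blocks k x ! j \<noteq> blocks k y ! j) = i"
    using i_len less earlier by (intro Least_equality) (auto simp: not_le[symmetric])
  then have "eta k x y = Some (Suc i, {blocks k x ! i, blocks k y ! i})"
    using assms(1) by (simp add: eta_def Let_def)
  with i_len less show ?thesis using that by blast
qed

lemma eta_eq_imp_same_blocks:
  assumes "x < y" "z < w" "length x = length y" "length z = length w" "0 < k"
    and "eta k x y = eta k z w"
  obtains i where "i < length (blocks k x)" "i < length (blocks k y)"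
    "i < length (blocks k z)" "i < length (blocks k w)"
    "blocks k z ! i = blocks k x ! i" "blocks k w ! i = blocks k y ! i"
    "blocks k x ! i < blocks k y ! i"
proof -
  obtain i where i: "i < length (blocks k x)" "i < length (blocks k y)"
    "eta k x y = Some (Suc i, {blocks k x ! i, blocks k y ! i})" "blocks k x ! i < blocks k y ! i"
    using eta_first_different_block[OF assms(1,3,5)] .
  obtain j where j: "j < length (blocks k z)" "j < length (blocks k w)"
    "eta k z w = Some (Suc j, {blocks k z ! j, blocks k w ! j})" "blocks k z ! j < blocks k w ! j"
    using eta_first_different_block[OF assms(2,4,5)] .
  have "i = j" "{blocks k x ! i, blocks k y ! i} = {blocks k z ! i, blocks k w ! i}"
    using assms(6) i(3) j(3) by auto
  then have "blocks k z ! i = blocks k x ! i \<and> blocks k w ! i = blocks k y ! i"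
    using i(4) j(4) by (auto simp: doubleton_eq_iff)
  with i j \<open>i = j\<close> show ?thesis using that by blast
qed

lemma psi_commute: "length x = length y \<Longrightarrow> psi r p \<alpha> x y = psi r p \<alpha> y x"
  by (cases x y rule: linorder_cases) (auto simp: psi_def lex_less_iff_less)

lemma psi_less:
  "length x = length y \<Longrightarrow> x < y \<Longrightarrow> psi r p \<alpha> x y = (cp r p \<alpha> x y, Delta r p \<alpha> x y)"
  by (simp add: psi_def lex_less_iff_less)

lemma hd_cp:
  assumes "length x = \<alpha>" "length y = \<alpha>" "0 < \<alpha>"
  shows "hd (cp r p \<alpha> x y) = [eta (rseq r p \<alpha> p) x y]"
  using assms blocks_length_self[of x] blocks_length_self[of y]
  by (simp add: cp_def xi_def rseq_def)

lemma nth_Delta: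
  assumes "i < length (blocks (rseq r p \<alpha> p) x)" "i < length (blocks (rseq r p \<alpha> p) y)"
  shows "Delta r p \<alpha> x y ! i =
    (if lex_le (blocks (rseq r p \<alpha> p) x ! i) (blocks (rseq r p \<alpha> p) y ! i) then 1 else -1)"
  using assms by (simp add: Delta_def)

lemma psi_nested_ne_if_consecutive_eq:
  assumes "0 < rseq r p \<alpha> p"
    and "length x = \<alpha>" "length y = \<alpha>" "length z = \<alpha>" "length w = \<alpha>"
    and "x < y" "y < z" "z < w"
    and "psi r p \<alpha> x y = psi r p \<alpha> z w"
  shows "psi r p \<alpha> x w \<noteq> psi r p \<alpha> y z"
proof
  define k where "k = rseq r p \<alpha> p"
  assume nested_eq: "psi r p \<alpha> x w = psi r p \<alpha> y z"
  have "0 < \<alpha>"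
    using assms(2,3,6) by (metis length_greater_0_conv not_less_Nil)
  have "cp r p \<alpha> x y = cp r p \<alpha> z w"
    using assms(2-9) by (simp add: psi_less)
  then have "[eta k x y] = [eta k z w]"
    using hd_cp[of x \<alpha> y r p] hd_cp[of z \<alpha> w r p] assms(2-5) \<open>0 < \<alpha>\<close>
    by (simp add: k_def)
  then obtain i where i: "i < length (blocks k x)" "i < length (blocks k y)"
    "i < length (blocks k z)" "i < length (blocks k w)"
    "blocks k z ! i = blocks k x ! i" "blocks k w ! i = blocks k y ! i"
    "blocks k x ! i < blocks k y ! i"
    using eta_eq_imp_same_blocks[of x y z w k] assms(1-8) by (auto simp: k_def)
  have "length (blocks k x ! i) = length (blocks k y ! i)"
    using i(1,2) assms(2,3) by (simp add: nth_blocks)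
  then have "lex_le (blocks k x ! i) (blocks k y ! i)" "\<not> lex_le (blocks k y ! i) (blocks k x ! i)"
    using i(7) by (simp_all add: lex_le_iff_le)
  then have "Delta r p \<alpha> x w ! i \<noteq> Delta r p \<alpha> y z ! i"
    using nth_Delta[of i r p \<alpha> x w] nth_Delta[of i r p \<alpha> y z] i(1-6) by (simp add: k_def)
  moreover have "Delta r p \<alpha> x w = Delta r p \<alpha> y z"
    using nested_eq assms(2-8) by (simp add: psi_less)
  ultimately show False by simp
qed

lemma obtain_sorted_four:
  fixes a b c e :: "'a::linorder"
  assumes "distinct [a, b, c, e]"
  obtains x y z w where "{x, y, z, w} = {a, b, c, e}" "x < y" "y < z" "z < w"
proof -
  define s where "s = sorted_list_of_set {a, b, c, e}"
  have "length s = 4"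
    using assms distinct_card[OF assms] by (simp add: s_def)
  then obtain x y z w where "s = [x, y, z, w]"
    by (auto simp: length_Suc_conv numeral_eq_Suc)
  moreover have "sorted_wrt (<) s" "set s = {a, b, c, e}"
    unfolding s_def by (rule strict_sorted_list_of_set, rule set_sorted_list_of_set, simp)
  ultimately show ?thesis using that by auto
qed

lemma striped_K4_matching_colors:
  assumes "striped_K4 f a b c e"
    and commute: "\<And>u v. u \<in> {a, b, c, e} \<Longrightarrow> v \<in> {a, b, c, e} \<Longrightarrow> f u v = f v u"
    and "{x, y, z, w} \<subseteq> {a, b, c, e}" "distinct [x, y, z, w]"
  shows "f x y = f z w"
proof -
  have "distinct [a, b, c, e]" "f a b = f c e" "f a c = f b e" "f a e = f b c"
    using assms(1) by (auto simp: striped_K4_def)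
  moreover have "f b a = f a b" "f c a = f a c" "f e a = f a e"
    and "f c b = f b c" "f e b = f b e" "f e c = f c e"
    using commute by auto
  ultimately show ?thesis using assms(3,4) by auto
qed

lemma striped_K4_sorted:
  fixes f :: "'a::linorder \<Rightarrow> 'a \<Rightarrow> 'c"
  assumes "striped_K4 f a b c e"
    and "\<And>u v. u \<in> {a, b, c, e} \<Longrightarrow> v \<in> {a, b, c, e} \<Longrightarrow> f u v = f v u"
  obtains x y z w where "{x, y, z, w} = {a, b, c, e}" "x < y" "y < z" "z < w"
    "f x y = f z w" "f x w = f y z"
proof -
  have "distinct [a, b, c, e]"
    using assms(1) by (simp add: striped_K4_def)
  then obtain x y z w where xyzw: "{x, y, z, w} = {a, b, c, e}" "x < y" "y < z" "z < w"
    by (rule obtain_sorted_four)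
  have "{x, y, z, w} \<subseteq> {a, b, c, e}" "distinct [x, y, z, w]"
    using xyzw by auto
  then have "f x y = f z w"
    using striped_K4_matching_colors[OF assms, of x y z w] by simp
  have "{x, w, y, z} \<subseteq> {a, b, c, e}" "distinct [x, w, y, z]"
    using xyzw by auto
  then have "f x w = f y z"
    using striped_K4_matching_colors[OF assms, of x w y z] by simp
  with \<open>f x y = f z w\<close> xyzw show ?thesis
    using that by blast
qed

theorem lemma2p3:
  fixes r :: "nat \<Rightarrow> nat" and p \<alpha> :: nat
  assumes "p \<ge> 1"
    and "1 \<le> r 1"
    and "\<And>d. 1 \<le> d \<Longrightarrow> d < p \<Longrightarrow> r d \<le> r (Suc d)"
    and "\<And>d. 1 \<le> d \<Longrightarrow> d < p \<Longrightarrow> r d dvd r (Suc d)"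
    and "\<alpha> \<ge> r p"
  shows "\<not> (\<exists>a b c e. length a = \<alpha> \<and> length b = \<alpha> \<and> length c = \<alpha> \<and> length e = \<alpha> \<and>
                striped_K4 (psi r p \<alpha>) a b c e)"
proof
  assume "\<exists>a b c e. length a = \<alpha> \<and> length b = \<alpha> \<and> length c = \<alpha> \<and> length e = \<alpha> \<and>
                striped_K4 (psi r p \<alpha>) a b c e"
  then obtain a b c e where len: "\<forall>u \<in> {a, b, c, e}. length u = \<alpha>"
    and striped: "striped_K4 (psi r p \<alpha>) a b c e"
    by auto
  have "r 1 \<le> r p"
    using assms(1)
  proof (induction rule: dec_induct)
    case (step n)
    then show ?case using assms(3)[of n] by simp
  qed simp
  then have k_pos: "0 < rseq r p \<alpha> p"
    using assms(1,2) by (simp add: rseq_def)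
  have "psi r p \<alpha> u v = psi r p \<alpha> v u" if "u \<in> {a, b, c, e}" "v \<in> {a, b, c, e}" for u v
    using len that by (intro psi_commute) auto
  then obtain x y z w where xyzw: "{x, y, z, w} = {a, b, c, e}" "x < y" "y < z" "z < w"
    and consecutive: "psi r p \<alpha> x y = psi r p \<alpha> z w"
    and nested: "psi r p \<alpha> x w = psi r p \<alpha> y z"
    by (rule striped_K4_sorted[OF striped])
  have "length x = \<alpha>" "length y = \<alpha>" "length z = \<alpha>" "length w = \<alpha>"
    using len unfolding xyzw(1)[symmetric] by simp_all
  with k_pos xyzw(2-4) consecutive nested show False
    using psi_nested_ne_if_consecutive_eq by blast
qed

end
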